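(* Let $a<b$ with $[a,b]\subset[0,\infty)$, let $f,g:[a,b]\to\mathbb{R}$ be integrable with $0\le g(t)\le1$ for all $t\in[a,b]$ and such that $\int_a^b g(t)f'(t)\,dt$ exists. Suppose $f$ is absolutely continuous on $[a,b]$ and $|f'|$ is $s$-convex on $[a,b]$ for some fixed $s\in(0,1]$. Let $\lambda:=\int_a^b g(t)\,dt$. Then $$\left|\int_a^{a+\lambda} f(t)\,dt-\int_a^b f(t)g(t)\,dt\right|\le\frac{1}{s+1}\left[\int_{a+\lambda}^b g(t)\,dt\right]\left[\lambda|f'(a)|+(b-a)|f'(a+\lambda)|+(b-a-\lambda)|f'(b)|\right]$$ $$\le\frac{b-a-\lambda}{s+1}\left[\lambda|f'(a)|+(b-a)|f'(a+\lambda)|+(b-a-\lambda)|f'(b)|\right],$$ and $$\left|\int_a^b f(t)g(t)\,dt-\int_{b-\lambda}^b f(t)\,dt\right|\le\frac{1}{s+1}\left[\int_a^{b-\lambda} g(t)\,dt\right]\left[(b-a-\lambda)|f'(a)|+(b-a)|f'(b-\lambda)|+\lambda|f'(b)|\right]$$ $$\le\frac{\lambda}{s+1}\left[(b-a-\lambda)|f'(a)|+(b-a)|f'(b-\lambda)|+\lambda|f'(b)|\right].$$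
   Context: For fixed $s\in(0,1]$, a function $h:I\to\mathbb{R}$ on an interval $I\subset[0,\infty)$ is $s$-convex (in the second sense) if $h(\alpha x+\beta y)\le\alpha^s h(x)+\beta^s h(y)$ for all $x,y\in I$ and all $\alpha,\beta\ge0$ with $\alpha+\beta=1$. *)

theory Defs
  imports "HOL-Analysis.Analysis"
begin

definition s_convex_on :: "real \<Rightarrow> real set \<Rightarrow> (real \<Rightarrow> real) \<Rightarrow> bool" where
  "s_convex_on s I h \<longleftrightarrow>
     (\<forall>x\<in>I. \<forall>y\<in>I. \<forall>\<alpha> \<beta>::real. \<alpha> \<ge> 0 \<longrightarrow> \<beta> \<ge> 0 \<longrightarrow> \<alpha> + \<beta> = 1 \<longrightarrow>
        h (\<alpha> * x + \<beta> * y) \<le> \<alpha> powr s * h x + \<beta> powr s * h y)"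

definition abs_continuous_on :: "real \<Rightarrow> real \<Rightarrow> (real \<Rightarrow> real) \<Rightarrow> bool" where
  "abs_continuous_on a b f \<longleftrightarrow>
     (\<forall>\<epsilon>>0. \<exists>\<delta>>0. \<forall>(n::nat) (u::nat \<Rightarrow> real) (v::nat \<Rightarrow> real).
        (\<forall>i<n. a \<le> u i \<and> u i \<le> v i \<and> v i \<le> b) \<longrightarrow>
        (\<forall>i<n. \<forall>j<n. i \<noteq> j \<longrightarrow> v i \<le> u j \<or> v j \<le> u i) \<longrightarrow>
        (\<Sum>i<n. v i - u i) < \<delta> \<longrightarrow>
        (\<Sum>i<n. \<bar>f (v i) - f (u i)\<bar>) < \<epsilon>)"

end

theory Submission
  imports Defs
begin

(* Let c be the split point (c = a + lam, resp. c = b - lam). The weights 1 - g on [a,c] and g on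
   [c,b] (resp. g and 1 - g) have equal mass m, so subtracting f c times m bounds the difference of
   the two integrals by m times the oscillations of f on [a,c] and on [c,b]. On [p,q], s-convexity
   puts |f'| below phi t = |f' p| ((q-t)/(q-p))^s + |f' q| ((t-p)/(q-p))^s, whose integral is
   (q-p)(|f' p| + |f' q|)/(s+1), and this bounds the oscillation of f because an absolutely
   continuous f with f' <= phi a.e. satisfies f v - f u <= integral of phi over [u,v]. The last fact
   is proved by a gauge argument: (integral of phi) - f has a nonnegative derivative off a null set N,
   and tags in N are given intervals inside an open set of small measure, where absolute continuity
   controls the increments of f. *)

lemma abs_continuous_on_finite_family:
  assumes "abs_continuous_on a b f" "0 < e"
  obtains d where "0 < d"
    and "\<And>(I::'i set) u v. finite I \<Longrightarrow> (\<forall>i\<in>I. a \<le> u i \<and> u i \<le> v i \<and> v i \<le> b)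
      \<Longrightarrow> (\<forall>i\<in>I. \<forall>j\<in>I. i \<noteq> j \<longrightarrow> v i \<le> u j \<or> v j \<le> u i)
      \<Longrightarrow> (\<Sum>i\<in>I. v i - u i) < d \<Longrightarrow> (\<Sum>i\<in>I. \<bar>f (v i) - f (u i)\<bar>) < e"
proof -
  obtain d where "0 < d" and ac: "\<forall>n u v. (\<forall>i<n. a \<le> u i \<and> u i \<le> v i \<and> v i \<le> b) \<longrightarrow>
        (\<forall>i<n. \<forall>j<n. i \<noteq> j \<longrightarrow> v i \<le> u j \<or> v j \<le> u i) \<longrightarrow>
        (\<Sum>i<(n::nat). v i - u i) < d \<longrightarrow> (\<Sum>i<n. \<bar>f (v i) - f (u i)\<bar>) < e"
    using assms(1)[unfolded abs_continuous_on_def, rule_format, OF assms(2)] by auto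
  show thesis
  proof (rule that[OF \<open>0 < d\<close>])
    fix I :: "'i set" and u v
    assume "finite I" and bounds: "\<forall>i\<in>I. a \<le> u i \<and> u i \<le> v i \<and> v i \<le> b"
      and disjoint: "\<forall>i\<in>I. \<forall>j\<in>I. i \<noteq> j \<longrightarrow> v i \<le> u j \<or> v j \<le> u i"
      and small: "(\<Sum>i\<in>I. v i - u i) < d"
    obtain h where h: "bij_betw h {..<card I} I"
      using ex_bij_betw_nat_finite[OF \<open>finite I\<close>] by (auto simp: lessThan_atLeast0)
    have sum_h: "(\<Sum>k<card I. F (h k)) = (\<Sum>i\<in>I. F i)" for F :: "'i \<Rightarrow> real"
      using sum.reindex_bij_betw[OF h] by simp
    have "h k \<in> I" if "k < card I" for k
      using h that by (auto simp: bij_betw_def)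
    moreover have "h k \<noteq> h l" if "k < card I" "l < card I" "k \<noteq> l" for k l
      using h that by (auto simp: bij_betw_def inj_on_def)
    ultimately have "(\<Sum>k<card I. \<bar>f (v (h k)) - f (u (h k))\<bar>) < e"
      using bounds disjoint small sum_h[of "\<lambda>i. v i - u i"] by (intro ac[rule_format]) auto
    then show "(\<Sum>i\<in>I. \<bar>f (v i) - f (u i)\<bar>) < e"
      using sum_h[of "\<lambda>i. \<bar>f (v i) - f (u i)\<bar>"] by simp
  qed
qed

lemma abs_continuous_on_imp_continuous_on:
  assumes "abs_continuous_on a b f"
  shows "continuous_on {a..b} f"
  unfolding continuous_on_iff
proof (intro ballI allI impI)
  fix t e :: real
  assume t: "t \<in> {a..b}" and "0 < e"
  obtain d where "0 < d" and ac: "\<And>(I::unit set) u v. finite I \<Longrightarrow>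
      (\<forall>i\<in>I. a \<le> u i \<and> u i \<le> v i \<and> v i \<le> b) \<Longrightarrow>
      (\<forall>i\<in>I. \<forall>j\<in>I. i \<noteq> j \<longrightarrow> v i \<le> u j \<or> v j \<le> u i) \<Longrightarrow>
      (\<Sum>i\<in>I. v i - u i) < d \<Longrightarrow> (\<Sum>i\<in>I. \<bar>f (v i) - f (u i)\<bar>) < e"
    by (rule abs_continuous_on_finite_family[OF assms \<open>0 < e\<close>]) blast
  have "dist (f w) (f t) < e" if "w \<in> {a..b}" "dist w t < d" for w
    using ac[of "{()}" "\<lambda>_. min w t" "\<lambda>_. max w t"] that t
    by (cases "w \<le> t") (auto simp: dist_real_def abs_minus_commute)
  with \<open>0 < d\<close> show "\<exists>d>0. \<forall>w\<in>{a..b}. dist w t < d \<longrightarrow> dist (f w) (f t) < e"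
    by blast
qed

lemma abs_continuous_on_uminus:
  "abs_continuous_on a b f \<Longrightarrow> abs_continuous_on a b (\<lambda>t. - f t)"
  unfolding abs_continuous_on_def by (simp add: abs_minus_commute)

lemma division_of_real_intervalE:
  fixes K :: "real set"
  assumes "D division_of S" "K \<in> D"
  obtains u v where "K = {u..v}" "u \<le> v"
proof -
  obtain u v where "K = cbox u v" using division_ofD(4)[OF assms] by blast
  moreover have "K \<noteq> {}" using division_ofD(3)[OF assms] .
  ultimately show thesis using that by auto
qed

lemma division_of_real_separated:
  fixes K K' :: "real set"
  assumes D: "D division_of S" and "K \<in> D" "K' \<in> D" "K \<noteq> K'"
    and "Inf K < Sup K" "Inf K' < Sup K'"
  shows "Sup K \<le> Inf K' \<or> Sup K' \<le> Inf K"
proof (rule ccontr)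
  obtain u v u' v' where K: "K = {u..v}" "u \<le> v" and K': "K' = {u'..v'}" "u' \<le> v'"
    using division_of_real_intervalE[OF D] assms(2,3) by metis
  have "{u<..<v} \<inter> {u'<..<v'} = {}"
    using division_ofD(5)[OF D assms(2-4)] K K' by simp
  moreover assume "\<not> ?thesis"
  then have "(max u u' + min v v') / 2 \<in> {u<..<v} \<inter> {u'<..<v'}"
    using assms(5,6) K K' by (auto simp: max_def min_def)
  ultimately show False by blast
qed

lemma abs_continuous_on_division_sum_lt:
  assumes "abs_continuous_on a b f" "0 < e"
  obtains d where "0 < d"
    and "\<And>D. D division_of \<Union>D \<Longrightarrow> \<Union>D \<subseteq> {a..b} \<Longrightarrow> measure lebesgue (\<Union>D) < d
           \<Longrightarrow> (\<Sum>K\<in>D. \<bar>f (Sup K) - f (Inf K)\<bar>) < e"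
proof -
  obtain d where "0 < d" and ac: "\<And>(I::real set set) u v. finite I \<Longrightarrow>
      (\<forall>i\<in>I. a \<le> u i \<and> u i \<le> v i \<and> v i \<le> b) \<Longrightarrow>
      (\<forall>i\<in>I. \<forall>j\<in>I. i \<noteq> j \<longrightarrow> v i \<le> u j \<or> v j \<le> u i) \<Longrightarrow>
      (\<Sum>i\<in>I. v i - u i) < d \<Longrightarrow> (\<Sum>i\<in>I. \<bar>f (v i) - f (u i)\<bar>) < e"
    by (rule abs_continuous_on_finite_family[OF assms]) blast
  show thesis
  proof (rule that[OF \<open>0 < d\<close>])
    fix D assume D: "D division_of \<Union>D" and sub: "\<Union>D \<subseteq> {a..b}"
      and small: "measure lebesgue (\<Union>D) < d"
    \<comment> \<open>Degenerate intervals contribute nothing, but may violate the non-overlap condition.\<close>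
    define D' where "D' = {K \<in> D. Inf K < Sup K}"
    have fin: "finite D" "finite D'" using D by (auto simp: D'_def)
    have ends: "K = {Inf K..Sup K}" "Inf K \<le> Sup K" "measure lebesgue K = Sup K - Inf K"
      if K: "K \<in> D" for K
    proof -
      obtain u v where "K = {u..v}" "u \<le> v"
        using division_of_real_intervalE[OF D K] .
      then show "K = {Inf K..Sup K}" "Inf K \<le> Sup K" "measure lebesgue K = Sup K - Inf K"
        by simp_all
    qed
    have "(\<Sum>K\<in>D. \<bar>f (Sup K) - f (Inf K)\<bar>) = (\<Sum>K\<in>D'. \<bar>f (Sup K) - f (Inf K)\<bar>)"
      using fin ends by (intro sum.mono_neutral_right) (auto simp: D'_def, metis order_le_less)
    also have "\<dots> < e"
    proof (rule ac[OF fin(2)])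
      show "\<forall>K\<in>D'. a \<le> Inf K \<and> Inf K \<le> Sup K \<and> Sup K \<le> b"
        using ends sub by (fastforce simp: D'_def)
      show "\<forall>K\<in>D'. \<forall>K'\<in>D'. K \<noteq> K' \<longrightarrow> Sup K \<le> Inf K' \<or> Sup K' \<le> Inf K"
        using division_of_real_separated[OF D] by (auto simp: D'_def)
      have "(\<Sum>K\<in>D'. Sup K - Inf K) = (\<Sum>K\<in>D'. measure lebesgue K)"
        using ends by (intro sum.cong) (auto simp: D'_def)
      also have "\<dots> \<le> (\<Sum>K\<in>D. measure lebesgue K)"
        using fin by (intro sum_mono2) (auto simp: D'_def)
      also have "\<dots> = measure lebesgue (\<Union>D)"
        by (rule content_division[OF D])
      finally show "(\<Sum>K\<in>D'. Sup K - Inf K) < d" using small by simp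
    qed
    finally show "(\<Sum>K\<in>D. \<bar>f (Sup K) - f (Inf K)\<bar>) < e" .
  qed
qed

lemma null_sets_open_superset:
  assumes "N \<in> null_sets lebesgue" "0 < (d::real)"
  obtains U where "open U" "N \<subseteq> U" "U \<in> lmeasurable" "measure lebesgue U < d"
proof -
  obtain T where T: "open T" "N \<subseteq> T" "T - N \<in> lmeasurable" "emeasure lebesgue (T - N) < ennreal d"
    using sets_lebesgue_outer_open[OF null_setsD2[OF assms(1)] assms(2)] by blast
  have T_eq: "T = (T - N) \<union> N" using T(2) by blast
  have "T \<in> lmeasurable"
    using T(3) fmeasurableI_null_sets[OF assms(1)] T_eq by (metis fmeasurable.Un)
  moreover have "measure lebesgue T = measure lebesgue (T - N)"
    using T_eq measure_Un_null_set[OF _ assms(1), of "T - N"] T(3) by (metis fmeasurableD)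
  moreover have "measure lebesgue (T - N) < d"
    using T(4) emeasure_eq_measure2[OF T(3)] by (simp add: ennreal_less_iff)
  ultimately show thesis using that[OF T(1,2)] by simp
qed

lemma has_real_derivative_nonneg_straddle:
  fixes G :: "real \<Rightarrow> real"
  assumes "(G has_real_derivative D) (at t within S)" "0 \<le> D" "0 < e"
  obtains d where "0 < d"
    and "\<And>u v. u \<in> S \<Longrightarrow> v \<in> S \<Longrightarrow> u \<le> t \<Longrightarrow> t \<le> v \<Longrightarrow> t - u < d \<Longrightarrow> v - t < d
           \<Longrightarrow> - e * (v - u) \<le> G v - G u"
proof -
  obtain d where "0 < d" and near: "\<And>w. w \<in> S \<Longrightarrow> \<bar>w - t\<bar> < d \<Longrightarrow>
      \<bar>G w - G t - D * (w - t)\<bar> \<le> e * \<bar>w - t\<bar>"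
    using assms(1,3) unfolding has_field_derivative_def has_derivative_within_alt
    by (metis real_norm_def)
  show thesis
  proof (rule that[OF \<open>0 < d\<close>])
    fix u v assume "u \<in> S" "v \<in> S" "u \<le> t" "t \<le> v" "t - u < d" "v - t < d"
    moreover from this have "0 \<le> D * (v - u)" using assms(2) by simp
    ultimately show "- e * (v - u) \<le> G v - G u"
      using near[of u] near[of v] by (auto simp: abs_le_iff algebra_simps)
  qed
qed

lemma abs_continuous_on_tagged_sum_lt:
  assumes "abs_continuous_on a b f" "0 < e"
  obtains d where "0 < d"
    and "\<And>q S U. q tagged_partial_division_of S \<Longrightarrow> S \<subseteq> {a..b} \<Longrightarrow> \<Union>(snd ` q) \<subseteq> U
           \<Longrightarrow> U \<in> lmeasurable \<Longrightarrow> measure lebesgue U < d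
           \<Longrightarrow> (\<Sum>(t,K)\<in>q. \<bar>f (Sup K) - f (Inf K)\<bar>) < e"
proof -
  obtain d where "0 < d" and ac: "\<And>D. D division_of \<Union>D \<Longrightarrow> \<Union>D \<subseteq> {a..b}
      \<Longrightarrow> measure lebesgue (\<Union>D) < d \<Longrightarrow> (\<Sum>K\<in>D. \<bar>f (Sup K) - f (Inf K)\<bar>) < e"
    by (rule abs_continuous_on_division_sum_lt[OF assms]) blast
  show thesis
  proof (rule that[OF \<open>0 < d\<close>])
    fix q S U assume q: "q tagged_partial_division_of S" and "S \<subseteq> {a..b}"
      and U: "\<Union>(snd ` q) \<subseteq> U" "U \<in> lmeasurable" "measure lebesgue U < d"
    have D: "snd ` q division_of \<Union>(snd ` q)"
      by (rule partial_division_of_tagged_division[OF q])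
    moreover have "\<Union>(snd ` q) \<subseteq> {a..b}"
      using tagged_partial_division_ofD(3)[OF q] \<open>S \<subseteq> {a..b}\<close> by fastforce
    moreover have "measure lebesgue (\<Union>(snd ` q)) \<le> measure lebesgue U"
      using measure_mono_fmeasurable[OF U(1) _ U(2)] lmeasurable_division[OF D] by blast
    ultimately have "(\<Sum>K\<in>snd ` q. \<bar>f (Sup K) - f (Inf K)\<bar>) < e"
      using ac U(3) by fastforce
    moreover have "(\<Sum>K\<in>snd ` q. \<bar>f (Sup K) - f (Inf K)\<bar>) = (\<Sum>(t,K)\<in>q. \<bar>f (Sup K) - f (Inf K)\<bar>)"
    proof (subst sum.reindex_nontrivial[OF tagged_partial_division_ofD(1)[OF q]])
      fix i j assume ij: "i \<in> q" "j \<in> q" "i \<noteq> j" "snd i = snd j"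
      obtain t t' K where i: "i = (t, K)" and j: "j = (t', K)"
        using ij(4) by (metis prod.collapse)
      obtain u v where K: "K = cbox u v"
        using tagged_partial_division_ofD(4)[OF q] ij(1) i by blast
      have "interior K = {}"
        using tagged_partial_division_ofD(5)[OF q] ij(1-3) i j by blast
      moreover have "K \<noteq> {}"
        using tagged_partial_division_ofD(2)[OF q] ij(1) i by blast
      ultimately have "Sup K = Inf K"
        using K by auto
      then show "\<bar>f (Sup (snd i)) - f (Inf (snd i))\<bar> = 0" by (simp add: i)
    qed (simp add: split_def comp_def)
    ultimately show "(\<Sum>(t,K)\<in>q. \<bar>f (Sup K) - f (Inf K)\<bar>) < e" by simp
  qed
qed

lemma tagged_division_straddle_off_null:
  fixes G :: "real \<Rightarrow> real"
  assumes der: "\<And>t. t \<in> {x..y} - N \<Longrightarrow> \<exists>D\<ge>0. (G has_real_derivative D) (at t within {x..y})"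
    and U: "open U" "N \<subseteq> U" and "0 < e"
  obtains p where "p tagged_division_of {x..y}"
    and "\<And>t K. (t, K) \<in> p \<Longrightarrow> t \<in> N \<Longrightarrow> K \<subseteq> U"
    and "\<And>t K. (t, K) \<in> p \<Longrightarrow> t \<notin> N \<Longrightarrow>
           - e * Henstock_Kurzweil_Integration.content K \<le> G (Sup K) - G (Inf K)"
proof -
  have "\<exists>d>0. t \<in> {x..y} - N \<longrightarrow> (\<forall>u v. u \<in> {x..y} \<longrightarrow> v \<in> {x..y} \<longrightarrow> u \<le> t \<longrightarrow> t \<le> v
          \<longrightarrow> t - u < d \<longrightarrow> v - t < d \<longrightarrow> - e * (v - u) \<le> G v - G u)" for t
  proof (cases "t \<in> {x..y} - N")
    case True
    then obtain D where D: "0 \<le> D" "(G has_real_derivative D) (at t within {x..y})"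
      using der by blast
    obtain d where "0 < d" and near: "\<And>u v. u \<in> {x..y} \<Longrightarrow> v \<in> {x..y} \<Longrightarrow> u \<le> t \<Longrightarrow> t \<le> v
        \<Longrightarrow> t - u < d \<Longrightarrow> v - t < d \<Longrightarrow> - e * (v - u) \<le> G v - G u"
      by (rule has_real_derivative_nonneg_straddle[OF D(2,1) \<open>0 < e\<close>]) blast
    show ?thesis
      by (intro exI[of _ d] conjI impI allI \<open>0 < d\<close>) (rule near; assumption)
  qed (use zero_less_one in blast)
  then obtain dd where dd: "\<And>t. 0 < dd t" and straddle: "\<And>t u v. t \<in> {x..y} - N \<Longrightarrow>
      u \<in> {x..y} \<Longrightarrow> v \<in> {x..y} \<Longrightarrow> u \<le> t \<Longrightarrow> t \<le> v \<Longrightarrow> t - u < dd t \<Longrightarrow> v - t < dd t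
      \<Longrightarrow> - e * (v - u) \<le> G v - G u"
    by metis
  define \<gamma> where "\<gamma> t = (if t \<in> N then U else ball t (dd t))" for t
  have "gauge \<gamma>"
    using U dd by (auto simp: gauge_def \<gamma>_def)
  then obtain p where p: "p tagged_division_of {x..y}" "\<gamma> fine p"
    using fine_division_exists_real by blast
  have intervals: "\<exists>u v. K = {u..v} \<and> u \<le> v \<and> x \<le> u \<and> v \<le> y \<and> t \<in> K \<and> K \<subseteq> \<gamma> t"
    if "(t, K) \<in> p" for t K
    using tagged_division_ofD(2-4)[OF p(1) that] p(2) that by (fastforce simp: fine_def)
  show thesis
  proof (rule that[OF p(1)])
    show "K \<subseteq> U" if "(t, K) \<in> p" "t \<in> N" for t K
      using intervals[OF that(1)] that(2) by (auto simp: \<gamma>_def)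
  next
    fix t K assume tK: "(t, K) \<in> p" "t \<notin> N"
    then obtain u v where K: "K = {u..v}" "u \<le> v" "x \<le> u" "v \<le> y" "t \<in> K" "K \<subseteq> ball t (dd t)"
      using intervals[OF tK(1)] by (auto simp: \<gamma>_def)
    then have "u \<in> ball t (dd t)" "v \<in> ball t (dd t)" by (auto simp del: mem_ball)
    then have "- e * (v - u) \<le> G v - G u"
      using tK K by (intro straddle[of t]) (auto simp: dist_real_def)
    then show "- e * Henstock_Kurzweil_Integration.content K \<le> G (Sup K) - G (Inf K)"
      using K by simp
  qed
qed

lemma tagged_division_subset_sum_ge:
  fixes h :: "real set \<Rightarrow> real"
  assumes p: "p tagged_division_of {x..y}" and "x \<le> y" and "q \<subseteq> p" and "0 \<le> e"
    and bound: "\<And>t K. (t, K) \<in> q \<Longrightarrow> - e * Henstock_Kurzweil_Integration.content K \<le> h K"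
  shows "- e * (y - x) \<le> (\<Sum>(t,K)\<in>q. h K)"
proof -
  have "(\<Sum>(t,K)\<in>q. Henstock_Kurzweil_Integration.content K)
      \<le> (\<Sum>(t,K)\<in>p. Henstock_Kurzweil_Integration.content K)"
    using p \<open>q \<subseteq> p\<close> by (intro sum_mono2) auto
  also have "\<dots> = y - x"
    using additive_content_tagged_division[of p x y] p \<open>x \<le> y\<close> by simp
  finally have "- e * (y - x) \<le> - e * (\<Sum>(t,K)\<in>q. Henstock_Kurzweil_Integration.content K)"
    using \<open>0 \<le> e\<close> by (simp add: mult_left_mono)
  also have "\<dots> \<le> (\<Sum>(t,K)\<in>q. h K)"
    unfolding sum_distrib_left split_def by (intro sum_mono) (use bound in force)
  finally show ?thesis .
qed

lemma increment_ge_minus_epsilon_if_ae_derivative_nonneg: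
  fixes M f :: "real \<Rightarrow> real"
  assumes ac: "abs_continuous_on a b f" and xy: "a \<le> x" "x \<le> y" "y \<le> b"
    and mono: "mono_on {x..y} M"
    and der: "AE t in lebesgue. t \<in> {x..y} \<longrightarrow>
                (\<exists>D\<ge>0. ((\<lambda>t. M t - f t) has_real_derivative D) (at t within {x..y}))"
    and "0 < e"
  shows "(M x - f x) - (M y - f y) \<le> e * (1 + (y - x))"
proof -
  define G where "G t = M t - f t" for t
  have "(\<lambda>t. M t - f t) = G" "space lebesgue = UNIV" by (simp_all add: G_def fun_eq_iff)
  then obtain N where derN: "\<And>t. t \<in> {x..y} - N \<Longrightarrow> \<exists>D\<ge>0. (G has_real_derivative D) (at t within {x..y})"
    and N: "N \<in> null_sets lebesgue"
    using AE_E3[OF der] by (metis Diff_iff UNIV_I)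
  obtain \<delta> where "0 < \<delta>" and ac_sum: "\<And>q S U. q tagged_partial_division_of S \<Longrightarrow> S \<subseteq> {a..b}
      \<Longrightarrow> \<Union>(snd ` q) \<subseteq> U \<Longrightarrow> U \<in> lmeasurable \<Longrightarrow> measure lebesgue U < \<delta>
      \<Longrightarrow> (\<Sum>(t,K)\<in>q. \<bar>f (Sup K) - f (Inf K)\<bar>) < e"
    by (rule abs_continuous_on_tagged_sum_lt[OF ac \<open>0 < e\<close>]) blast
  obtain U where U: "open U" "N \<subseteq> U" "U \<in> lmeasurable" "measure lebesgue U < \<delta>"
    using null_sets_open_superset[OF N \<open>0 < \<delta>\<close>] .
  obtain p where p: "p tagged_division_of {x..y}" and in_U: "\<And>t K. (t, K) \<in> p \<Longrightarrow> t \<in> N \<Longrightarrow> K \<subseteq> U"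
    and off_N: "\<And>t K. (t, K) \<in> p \<Longrightarrow> t \<notin> N \<Longrightarrow>
           - e * Henstock_Kurzweil_Integration.content K \<le> G (Sup K) - G (Inf K)"
    using tagged_division_straddle_off_null[OF derN U(1,2) \<open>0 < e\<close>] by blast
  define pN where "pN = {(t, K) \<in> p. t \<in> N}"
  have "pN \<subseteq> p" "finite p" using p by (auto simp: pN_def)
  have pN: "pN tagged_partial_division_of {x..y}"
    using tagged_partial_division_subset[OF _ \<open>pN \<subseteq> p\<close>] p by (auto simp: tagged_division_of_def)
  have "G y - G x = (\<Sum>(t,K)\<in>p. G (Sup K) - G (Inf K))"
    using additive_tagged_division_1[OF xy(2) p, of G] by simp
  also have "\<dots> = (\<Sum>(t,K)\<in>pN. G (Sup K) - G (Inf K)) + (\<Sum>(t,K)\<in>p - pN. G (Sup K) - G (Inf K))"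
    using sum.subset_diff[OF \<open>pN \<subseteq> p\<close> \<open>finite p\<close>, of "\<lambda>(t,K). G (Sup K) - G (Inf K)"] by linarith
  finally have split: "G y - G x = \<dots>" .
  have "- \<bar>f (Sup K) - f (Inf K)\<bar> \<le> G (Sup K) - G (Inf K)" if tK: "(t, K) \<in> p" for t K
  proof -
    obtain u v where "K = cbox u v" using tagged_division_ofD(4)[OF p tK] by blast
    moreover have "t \<in> K" "K \<subseteq> {x..y}" using tagged_division_ofD(2,3)[OF p tK] by auto
    ultimately have "M (Inf K) \<le> M (Sup K)" using mono by (auto elim!: mono_onD)
    then show ?thesis unfolding G_def by linarith
  qed
  then have "- (\<Sum>(t,K)\<in>pN. \<bar>f (Sup K) - f (Inf K)\<bar>) \<le> (\<Sum>(t,K)\<in>pN. G (Sup K) - G (Inf K))"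
    by (auto simp: pN_def sum_negf[symmetric] intro: sum_mono)
  moreover have "(\<Sum>(t,K)\<in>pN. \<bar>f (Sup K) - f (Inf K)\<bar>) < e"
    using in_U xy by (intro ac_sum[OF pN _ _ U(3,4)]) (force simp: pN_def)+
  moreover have "- e * (y - x) \<le> (\<Sum>(t,K)\<in>p - pN. G (Sup K) - G (Inf K))"
    using off_N \<open>0 < e\<close> by (intro tagged_division_subset_sum_ge[OF p xy(2)]) (auto simp: pN_def)
  ultimately show ?thesis
    using split unfolding G_def by (simp add: algebra_simps)
qed

lemma increment_nonneg_if_ae_derivative_nonneg:
  fixes M f :: "real \<Rightarrow> real"
  assumes "abs_continuous_on a b f" "a \<le> x" "x \<le> y" "y \<le> b"
    and "mono_on {x..y} M"
    and "AE t in lebesgue. t \<in> {x..y} \<longrightarrow>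
           (\<exists>D\<ge>0. ((\<lambda>t. M t - f t) has_real_derivative D) (at t within {x..y}))"
  shows "M x - f x \<le> M y - f y"
proof -
  have "(M x - f x) - (M y - f y) \<le> 0 + e" if "0 < e" for e
  proof -
    have "0 < e / (1 + (y - x))" using that assms(3) by simp
    from increment_ge_minus_epsilon_if_ae_derivative_nonneg[OF assms this]
    show ?thesis using assms(3) by simp
  qed
  then have "(M x - f x) - (M y - f y) \<le> 0" by (rule field_le_epsilon)
  then show ?thesis by simp
qed

lemma abs_continuous_on_increment_le_integral:
  fixes f f' \<phi> :: "real \<Rightarrow> real"
  assumes ac: "abs_continuous_on a b f" and xy: "a \<le> x" "x \<le> y" "y \<le> b"
    and \<phi>: "continuous_on {x..y} \<phi>" "\<And>t. t \<in> {x..y} \<Longrightarrow> 0 \<le> \<phi> t"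
    and der: "AE t in lebesgue. t \<in> {x..y} \<longrightarrow> (f has_real_derivative f' t) (at t)"
    and le: "\<And>t. t \<in> {x..y} \<Longrightarrow> f' t \<le> \<phi> t"
  shows "f y - f x \<le> integral {x..y} \<phi>"
proof -
  define \<Phi> where "\<Phi> u = integral {x..u} \<phi>" for u
  have "mono_on {x..y} \<Phi>"
  proof (rule mono_onI)
    fix u v assume uv: "u \<in> {x..y}" "v \<in> {x..y}" "u \<le> v"
    have int: "\<phi> integrable_on {x..v}"
      using uv by (intro integrable_continuous_interval continuous_on_subset[OF \<phi>(1)]) auto
    have "0 \<le> integral {u..v} \<phi>"
      using uv \<phi>(2) by (intro integral_nonneg integrable_subinterval_real[OF int]) auto
    then show "\<Phi> u \<le> \<Phi> v"
      using Henstock_Kurzweil_Integration.integral_combine[of x u v \<phi>] int uv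
      by (simp add: \<Phi>_def)
  qed
  moreover have "AE t in lebesgue. t \<in> {x..y} \<longrightarrow>
      (\<exists>D\<ge>0. ((\<lambda>t. \<Phi> t - f t) has_real_derivative D) (at t within {x..y}))"
    using der
  proof (rule eventually_mono, intro impI)
    fix t assume t: "t \<in> {x..y}" and "t \<in> {x..y} \<longrightarrow> (f has_real_derivative f' t) (at t)"
    then have "(f has_real_derivative f' t) (at t within {x..y})"
      by (auto intro: has_field_derivative_at_within)
    moreover have "(\<Phi> has_real_derivative \<phi> t) (at t within {x..y})"
      using integral_has_vector_derivative[OF \<phi>(1) t]
      by (simp add: \<Phi>_def[abs_def] has_real_derivative_iff_has_vector_derivative)
    ultimately have "((\<lambda>t. \<Phi> t - f t) has_real_derivative \<phi> t - f' t) (at t within {x..y})"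
      by (intro derivative_intros)
    then show "\<exists>D\<ge>0. ((\<lambda>t. \<Phi> t - f t) has_real_derivative D) (at t within {x..y})"
      using le[OF t] by (intro exI[of _ "\<phi> t - f' t"]) simp
  qed
  ultimately have "\<Phi> x - f x \<le> \<Phi> y - f y"
    by (rule increment_nonneg_if_ae_derivative_nonneg[OF ac xy])
  then show ?thesis by (simp add: \<Phi>_def)
qed

lemma has_integral_affine_powr:
  fixes p q s :: real
  assumes "p < q" "-1 < s"
  shows "((\<lambda>u. ((u - p) / (q - p)) powr s) has_integral (q - p) / (s + 1)) {p..q}"
proof -
  define F where "F u = (q - p) / (s + 1) * ((u - p) / (q - p)) powr (s + 1)" for u
  have "((\<lambda>u. ((u - p) / (q - p)) powr s) has_integral F q - F p) {p..q}"
  proof (rule fundamental_theorem_of_calculus_interior)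
    show "continuous_on {p..q} F"
      unfolding F_def using assms by (intro continuous_intros continuous_on_powr') auto
    fix u assume u: "u \<in> {p<..<q}"
    then have "0 < (u - p) / (q - p)" by simp
    then have "(F has_real_derivative (q - p) / (s + 1) * ((s + 1) * ((u - p) / (q - p)) powr (s + 1 - 1) * (1 / (q - p)))) (at u)"
      unfolding F_def using assms by (auto intro!: derivative_eq_intros)
    moreover have "(q - p) / (s + 1) * ((s + 1) * ((u - p) / (q - p)) powr (s + 1 - 1) * (1 / (q - p)))
        = ((u - p) / (q - p)) powr s"
      using assms by (simp add: divide_simps)
    ultimately show "(F has_vector_derivative ((u - p) / (q - p)) powr s) (at u)"
      by (simp add: has_real_derivative_iff_has_vector_derivative)
  qed (use assms in simp)
  moreover have "F q - F p = (q - p) / (s + 1)"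
    unfolding F_def using assms by simp
  ultimately show ?thesis by simp
qed

lemma has_integral_affine_powr_reflected:
  fixes p q s :: real
  assumes "p < q" "-1 < s"
  shows "((\<lambda>u. ((q - u) / (q - p)) powr s) has_integral (q - p) / (s + 1)) {p..q}"
proof -
  have "((\<lambda>u. ((u + q) / (q - p)) powr s) has_integral (q - p) / (s + 1)) {-q..-p}"
    using has_integral_affine_powr[of "-q" "-p" s] assms by simp
  from has_integral_reflect_real[THEN iffD2, OF this]
  show ?thesis by (simp add: algebra_simps)
qed

lemma s_convex_on_le_interpolation:
  assumes "s_convex_on s I h" "p \<in> I" "q \<in> I" "p < q" "w \<in> {p..q}"
  shows "h w \<le> ((q - w) / (q - p)) powr s * h p + ((w - p) / (q - p)) powr s * h q"
proof -
  have "(q - w) / (q - p) * p + (w - p) / (q - p) * q = w"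
    using assms(4) by (simp add: divide_simps) (simp add: algebra_simps)
  moreover have "(q - w) / (q - p) + (w - p) / (q - p) = 1"
    using assms(4) by (simp add: add_divide_distrib[symmetric])
  ultimately show ?thesis
    using assms unfolding s_convex_on_def by (metis atLeastAtMost_iff diff_ge_0_iff_ge divide_nonneg_pos diff_gt_0_iff_gt)
qed

lemma s_convex_abs_derivative_increment_le:
  fixes f f' :: "real \<Rightarrow> real"
  assumes ac: "abs_continuous_on a b f"
    and der: "AE t in lebesgue. t \<in> {a..b} \<longrightarrow> (f has_real_derivative f' t) (at t)"
    and sc: "s_convex_on s {a..b} (\<lambda>t. \<bar>f' t\<bar>)" and "0 < s"
    and pq: "a \<le> p" "p \<le> q" "q \<le> b" and uv: "p \<le> u" "u \<le> v" "v \<le> q"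
  shows "\<bar>f v - f u\<bar> \<le> (q - p) * (\<bar>f' p\<bar> + \<bar>f' q\<bar>) / (s + 1)"
proof (cases "p = q")
  case True
  with uv have "u = v" by simp
  with pq \<open>0 < s\<close> show ?thesis by simp
next
  case False
  with pq have "p < q" by simp
  define \<phi> where "\<phi> w = \<bar>f' p\<bar> * ((q - w) / (q - p)) powr s + \<bar>f' q\<bar> * ((w - p) / (q - p)) powr s" for w
  have \<phi>_cont: "continuous_on {u..v} \<phi>"
    unfolding \<phi>_def using \<open>p < q\<close> \<open>0 < s\<close> uv by (intro continuous_intros continuous_on_powr') auto
  have \<phi>_nonneg: "0 \<le> \<phi> w" for w
    unfolding \<phi>_def by simp
  have \<phi>_int: "(\<phi> has_integral (q - p) * (\<bar>f' p\<bar> + \<bar>f' q\<bar>) / (s + 1)) {p..q}"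
  proof -
    have "(\<phi> has_integral \<bar>f' p\<bar> * ((q - p) / (s + 1)) + \<bar>f' q\<bar> * ((q - p) / (s + 1))) {p..q}"
      unfolding \<phi>_def using \<open>p < q\<close> \<open>0 < s\<close>
      by (intro has_integral_add has_integral_mult_right has_integral_affine_powr
          has_integral_affine_powr_reflected) auto
    then show ?thesis by (simp add: algebra_simps add_divide_distrib[symmetric])
  qed
  have "integral {u..v} \<phi> \<le> integral {p..q} \<phi>"
  proof (rule integral_subset_le)
    show "\<phi> integrable_on {p..q}" using \<phi>_int by blast
    then show "\<phi> integrable_on {u..v}" by (rule integrable_subinterval_real) (use uv in auto)
  qed (use uv \<phi>_nonneg in auto)
  also have "\<dots> = (q - p) * (\<bar>f' p\<bar> + \<bar>f' q\<bar>) / (s + 1)"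
    using \<phi>_int by (rule integral_unique)
  finally have \<phi>_le: "integral {u..v} \<phi> \<le> \<dots>" .
  have bound: "\<bar>f' t\<bar> \<le> \<phi> t" if "t \<in> {u..v}" for t
    using s_convex_on_le_interpolation[OF sc _ _ \<open>p < q\<close>, of t] that pq uv
    by (simp add: \<phi>_def mult.commute)
  have der_uv: "AE t in lebesgue. t \<in> {u..v} \<longrightarrow> (f has_real_derivative f' t) (at t)"
    using der by (rule eventually_mono) (use pq uv in auto)
  have "f v - f u \<le> integral {u..v} \<phi>"
    using bound pq uv by (intro abs_continuous_on_increment_le_integral[OF ac _ _ _ \<phi>_cont _ der_uv])
      (auto simp: \<phi>_nonneg abs_le_iff)
  moreover have "(- f v) - (- f u) \<le> integral {u..v} \<phi>"
    using bound pq uv der_uv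
    by (intro abs_continuous_on_increment_le_integral[OF abs_continuous_on_uminus[OF ac] _ _ _ \<phi>_cont, of "\<lambda>t. - f' t"])
      (auto simp: \<phi>_nonneg abs_le_iff elim!: eventually_mono intro: DERIV_minus)
  ultimately show ?thesis using \<phi>_le by linarith
qed

lemma integral_weighted_deviation_le:
  fixes f w :: "real \<Rightarrow> real"
  assumes fw: "(\<lambda>t. f t * w t) integrable_on S" and w: "w integrable_on S"
    and bound: "\<And>t. t \<in> S \<Longrightarrow> \<bar>f t - F\<bar> \<le> K \<and> 0 \<le> w t"
  shows "\<bar>integral S (\<lambda>t. f t * w t) - F * integral S w\<bar> \<le> K * integral S w"
proof -
  have cw: "(\<lambda>t. c * w t) integrable_on S" for c
    using integrable_on_cmult_left[OF w, of c] by simp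
  have "integral S (\<lambda>t. f t * w t) - F * integral S w = integral S (\<lambda>t. f t * w t - F * w t)"
    using integral_diff[OF fw cw] by simp
  moreover have "norm (integral S (\<lambda>t. f t * w t - F * w t)) \<le> integral S (\<lambda>t. K * w t)"
  proof (rule integral_norm_bound_integral)
    show "(\<lambda>t. f t * w t - F * w t) integrable_on S"
      using fw cw by (rule integrable_diff)
    show "norm (f t * w t - F * w t) \<le> K * w t" if "t \<in> S" for t
      using bound[OF that] by (simp add: abs_mult mult_right_mono flip: left_diff_distrib)
  qed (rule cw)
  ultimately show ?thesis by simp
qed

lemma balanced_weights_integral_diff_le:
  fixes f w1 w2 :: "real \<Rightarrow> real"
  assumes "(\<lambda>t. f t * w1 t) integrable_on {a..c}" "w1 integrable_on {a..c}"
    and "(\<lambda>t. f t * w2 t) integrable_on {c..b}" "w2 integrable_on {c..b}"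
    and "\<And>t. t \<in> {a..c} \<Longrightarrow> \<bar>f t - f c\<bar> \<le> K1 \<and> 0 \<le> w1 t"
    and "\<And>t. t \<in> {c..b} \<Longrightarrow> \<bar>f t - f c\<bar> \<le> K2 \<and> 0 \<le> w2 t"
    and balanced: "integral {a..c} w1 = integral {c..b} w2"
  shows "\<bar>integral {a..c} (\<lambda>t. f t * w1 t) - integral {c..b} (\<lambda>t. f t * w2 t)\<bar>
           \<le> (K1 + K2) * integral {c..b} w2"
  using integral_weighted_deviation_le[OF assms(1,2,5)] integral_weighted_deviation_le[OF assms(3,4,6)]
  unfolding balanced by (simp add: abs_le_iff algebra_simps)

lemma continuous_on_mult_nonneg_integrable:
  fixes f g :: "real \<Rightarrow> real"
  assumes f: "continuous_on {a..b} f" and g: "g integrable_on {a..b}" "\<And>t. t \<in> {a..b} \<Longrightarrow> 0 \<le> g t"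
  shows "(\<lambda>t. f t * g t) integrable_on {a..b}"
proof -
  have "g absolutely_integrable_on {a..b}"
    using g by (rule nonnegative_absolutely_integrable_1)
  moreover have "bounded (f ` {a..b})"
    using compact_continuous_image[OF f compact_Icc] by (rule compact_imp_bounded)
  ultimately have "(\<lambda>t. f t * g t) absolutely_integrable_on {a..b}"
    using f by (intro absolutely_integrable_bounded_measurable_product_real
        continuous_imp_measurable_on_sets_lebesgue) auto
  then show ?thesis using set_lebesgue_integral_eq_integral(1) by blast
qed

lemma s_convex_balanced_weights_bound:
  fixes f f' w1 w2 :: "real \<Rightarrow> real"
  assumes ac: "abs_continuous_on a b f"
    and der: "AE t in lebesgue. t \<in> {a..b} \<longrightarrow> (f has_real_derivative f' t) (at t)"
    and sc: "s_convex_on s {a..b} (\<lambda>t. \<bar>f' t\<bar>)" and "0 < s"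
    and c: "a \<le> c" "c \<le> b"
    and w1: "w1 integrable_on {a..c}" "\<And>t. t \<in> {a..c} \<Longrightarrow> 0 \<le> w1 t"
    and w2: "w2 integrable_on {c..b}" "\<And>t. t \<in> {c..b} \<Longrightarrow> 0 \<le> w2 t"
    and balanced: "integral {a..c} w1 = integral {c..b} w2"
  shows "\<bar>integral {a..c} (\<lambda>t. f t * w1 t) - integral {c..b} (\<lambda>t. f t * w2 t)\<bar>
           \<le> 1 / (s + 1) * integral {c..b} w2
               * ((c - a) * \<bar>f' a\<bar> + (b - a) * \<bar>f' c\<bar> + (b - c) * \<bar>f' b\<bar>)"
proof -
  have f: "continuous_on {a..b} f"
    by (rule abs_continuous_on_imp_continuous_on[OF ac])
  have "\<bar>integral {a..c} (\<lambda>t. f t * w1 t) - integral {c..b} (\<lambda>t. f t * w2 t)\<bar>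
      \<le> ((c - a) * (\<bar>f' a\<bar> + \<bar>f' c\<bar>) / (s + 1) + (b - c) * (\<bar>f' c\<bar> + \<bar>f' b\<bar>) / (s + 1))
         * integral {c..b} w2"
  proof (rule balanced_weights_integral_diff_le[OF _ w1(1) _ w2(1) _ _ balanced])
    show "(\<lambda>t. f t * w1 t) integrable_on {a..c}" "(\<lambda>t. f t * w2 t) integrable_on {c..b}"
      using c w1 w2 by (auto intro!: continuous_on_mult_nonneg_integrable continuous_on_subset[OF f])
    show "\<bar>f t - f c\<bar> \<le> (c - a) * (\<bar>f' a\<bar> + \<bar>f' c\<bar>) / (s + 1) \<and> 0 \<le> w1 t" if "t \<in> {a..c}" for t
      using s_convex_abs_derivative_increment_le[OF ac der sc \<open>0 < s\<close>, of a c t c] that c w1(2)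
      by (simp add: abs_minus_commute)
    show "\<bar>f t - f c\<bar> \<le> (b - c) * (\<bar>f' c\<bar> + \<bar>f' b\<bar>) / (s + 1) \<and> 0 \<le> w2 t" if "t \<in> {c..b}" for t
      using s_convex_abs_derivative_increment_le[OF ac der sc \<open>0 < s\<close>, of c b c t] that c w2(2)
      by simp
  qed
  also have "\<dots> = 1 / (s + 1) * integral {c..b} w2
               * ((c - a) * \<bar>f' a\<bar> + (b - a) * \<bar>f' c\<bar> + (b - c) * \<bar>f' b\<bar>)"
  proof -
    have "(c - a) * (\<bar>f' a\<bar> + \<bar>f' c\<bar>) + (b - c) * (\<bar>f' c\<bar> + \<bar>f' b\<bar>)
        = (c - a) * \<bar>f' a\<bar> + (b - a) * \<bar>f' c\<bar> + (b - c) * \<bar>f' b\<bar>"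
      by (simp add: algebra_simps)
    then show ?thesis unfolding add_divide_distrib[symmetric] by simp
  qed
  finally show ?thesis .
qed

lemma integral_unit_bounded_le:
  fixes g :: "real \<Rightarrow> real"
  assumes "g integrable_on {c..d}" "c \<le> d" "\<And>t. t \<in> {c..d} \<Longrightarrow> 0 \<le> g t \<and> g t \<le> 1"
  shows "0 \<le> integral {c..d} g" "integral {c..d} g \<le> d - c"
proof -
  show "0 \<le> integral {c..d} g"
    using assms by (intro integral_nonneg) auto
  have "integral {c..d} g \<le> integral {c..d} (\<lambda>_. 1::real)"
    using assms by (intro integral_le) auto
  with assms(2) show "integral {c..d} g \<le> d - c" by simp
qed

lemma integral_one_minus:
  fixes g :: "real \<Rightarrow> real"
  assumes "g integrable_on {c..d}" "c \<le> d"
  shows "integral {c..d} (\<lambda>t. 1 - g t) = (d - c) - integral {c..d} g"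
  using integral_diff[OF integrable_const_ivl assms(1), of 1] assms(2) by simp

lemma integral_mult_one_minus:
  fixes f g :: "real \<Rightarrow> real"
  assumes "f integrable_on S" "(\<lambda>t. f t * g t) integrable_on S"
  shows "integral S (\<lambda>t. f t * (1 - g t)) = integral S f - integral S (\<lambda>t. f t * g t)"
  using integral_diff[OF assms] by (simp add: right_diff_distrib)

lemma steffensen_left_deviation_le:
  fixes f f' g :: "real \<Rightarrow> real"
  assumes ac: "abs_continuous_on a b f"
    and der: "AE t in lebesgue. t \<in> {a..b} \<longrightarrow> (f has_real_derivative f' t) (at t)"
    and sc: "s_convex_on s {a..b} (\<lambda>t. \<bar>f' t\<bar>)" and "0 < s" and "a \<le> b"
    and g: "g integrable_on {a..b}" "\<And>t. t \<in> {a..b} \<Longrightarrow> 0 \<le> g t \<and> g t \<le> 1"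
  defines "lam \<equiv> integral {a..b} g"
  shows "\<bar>integral {a..a+lam} f - integral {a..b} (\<lambda>t. f t * g t)\<bar>
           \<le> 1 / (s + 1) * integral {a+lam..b} g
               * (lam * \<bar>f' a\<bar> + (b - a) * \<bar>f' (a+lam)\<bar> + (b - a - lam) * \<bar>f' b\<bar>)"
proof -
  define c where "c = a + lam"
  have c: "a \<le> c" "c \<le> b"
    using integral_unit_bounded_le[OF g(1) \<open>a \<le> b\<close> g(2)] by (auto simp: c_def lam_def)
  have f: "continuous_on {a..b} f"
    by (rule abs_continuous_on_imp_continuous_on[OF ac])
  have sub: "{a..c} \<subseteq> {a..b}" "{c..b} \<subseteq> {a..b}" using c by auto
  have fg: "(\<lambda>t. f t * g t) integrable_on {a..b}"
    using g by (intro continuous_on_mult_nonneg_integrable[OF f]) auto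
  have "integral {a..c} (\<lambda>t. 1 - g t) = lam - integral {a..c} g"
    using integral_one_minus[OF integrable_on_subinterval[OF g(1) sub(1)] c(1)] by (simp add: c_def)
  also have "\<dots> = integral {c..b} g"
    using Henstock_Kurzweil_Integration.integral_combine[OF c g(1)] by (simp add: lam_def)
  finally have "\<bar>integral {a..c} (\<lambda>t. f t * (1 - g t)) - integral {c..b} (\<lambda>t. f t * g t)\<bar>
      \<le> 1 / (s + 1) * integral {c..b} g * ((c - a) * \<bar>f' a\<bar> + (b - a) * \<bar>f' c\<bar> + (b - c) * \<bar>f' b\<bar>)"
    using g sub by (intro s_convex_balanced_weights_bound[OF ac der sc \<open>0 < s\<close> c]
        integrable_diff integrable_const_ivl) (auto intro: integrable_on_subinterval)
  moreover have "integral {a..c} (\<lambda>t. f t * (1 - g t)) - integral {c..b} (\<lambda>t. f t * g t)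
      = integral {a..c} f - integral {a..b} (\<lambda>t. f t * g t)"
    using integral_mult_one_minus[OF integrable_continuous_interval integrable_on_subinterval[OF fg sub(1)]]
      Henstock_Kurzweil_Integration.integral_combine[OF c fg] continuous_on_subset[OF f sub(1)]
    by simp
  ultimately show ?thesis by (simp add: c_def diff_diff_eq)
qed

lemma steffensen_right_deviation_le:
  fixes f f' g :: "real \<Rightarrow> real"
  assumes ac: "abs_continuous_on a b f"
    and der: "AE t in lebesgue. t \<in> {a..b} \<longrightarrow> (f has_real_derivative f' t) (at t)"
    and sc: "s_convex_on s {a..b} (\<lambda>t. \<bar>f' t\<bar>)" and "0 < s" and "a \<le> b"
    and g: "g integrable_on {a..b}" "\<And>t. t \<in> {a..b} \<Longrightarrow> 0 \<le> g t \<and> g t \<le> 1"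
  defines "lam \<equiv> integral {a..b} g"
  shows "\<bar>integral {a..b} (\<lambda>t. f t * g t) - integral {b-lam..b} f\<bar>
           \<le> 1 / (s + 1) * integral {a..b-lam} g
               * ((b - a - lam) * \<bar>f' a\<bar> + (b - a) * \<bar>f' (b-lam)\<bar> + lam * \<bar>f' b\<bar>)"
proof -
  define c where "c = b - lam"
  have c: "a \<le> c" "c \<le> b"
    using integral_unit_bounded_le[OF g(1) \<open>a \<le> b\<close> g(2)] by (auto simp: c_def lam_def)
  have f: "continuous_on {a..b} f"
    by (rule abs_continuous_on_imp_continuous_on[OF ac])
  have sub: "{a..c} \<subseteq> {a..b}" "{c..b} \<subseteq> {a..b}" using c by auto
  have fg: "(\<lambda>t. f t * g t) integrable_on {a..b}"
    using g by (intro continuous_on_mult_nonneg_integrable[OF f]) auto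
  have "integral {c..b} (\<lambda>t. 1 - g t) = lam - integral {c..b} g"
    using integral_one_minus[OF integrable_on_subinterval[OF g(1) sub(2)] c(2)] by (simp add: c_def)
  also have "\<dots> = integral {a..c} g"
    using Henstock_Kurzweil_Integration.integral_combine[OF c g(1)] by (simp add: lam_def)
  finally have balanced: "integral {c..b} (\<lambda>t. 1 - g t) = integral {a..c} g" .
  have "\<bar>integral {a..c} (\<lambda>t. f t * g t) - integral {c..b} (\<lambda>t. f t * (1 - g t))\<bar>
      \<le> 1 / (s + 1) * integral {c..b} (\<lambda>t. 1 - g t)
         * ((c - a) * \<bar>f' a\<bar> + (b - a) * \<bar>f' c\<bar> + (b - c) * \<bar>f' b\<bar>)"
    using g sub balanced by (intro s_convex_balanced_weights_bound[OF ac der sc \<open>0 < s\<close> c]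
        integrable_diff integrable_const_ivl) (auto intro: integrable_on_subinterval)
  then have "\<bar>integral {a..c} (\<lambda>t. f t * g t) - integral {c..b} (\<lambda>t. f t * (1 - g t))\<bar>
      \<le> 1 / (s + 1) * integral {a..c} g
         * ((c - a) * \<bar>f' a\<bar> + (b - a) * \<bar>f' c\<bar> + (b - c) * \<bar>f' b\<bar>)"
    unfolding balanced .
  moreover have "integral {a..c} (\<lambda>t. f t * g t) - integral {c..b} (\<lambda>t. f t * (1 - g t))
      = integral {a..b} (\<lambda>t. f t * g t) - integral {c..b} f"
    using integral_mult_one_minus[OF integrable_continuous_interval integrable_on_subinterval[OF fg sub(2)]]
      Henstock_Kurzweil_Integration.integral_combine[OF c fg] continuous_on_subset[OF f sub(2)]
    by simp
  ultimately show ?thesis by (simp add: c_def diff_diff_eq add.commute[of lam a])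
qed

theorem theorem2p5:
  fixes a b s :: real and f f' g :: "real \<Rightarrow> real"
  assumes ab: "0 \<le> a" "a < b"
    and s: "0 < s" "s \<le> 1"
    and f_int: "f integrable_on {a..b}"
    and g_int: "g integrable_on {a..b}"
    and g_bounds: "\<And>t. t \<in> {a..b} \<Longrightarrow> 0 \<le> g t \<and> g t \<le> 1"
    and gf'_int: "(\<lambda>t. g t * f' t) integrable_on {a..b}"
    and f_ac: "abs_continuous_on a b f"
    and f'_deriv: "AE t in lebesgue. t \<in> {a..b} \<longrightarrow> (f has_real_derivative f' t) (at t)"
    and f'_sconv: "s_convex_on s {a..b} (\<lambda>t. \<bar>f' t\<bar>)"
  defines "lam \<equiv> integral {a..b} g"
  shows "\<bar>integral {a..a+lam} f - integral {a..b} (\<lambda>t. f t * g t)\<bar>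
           \<le> 1 / (s + 1) * integral {a+lam..b} g
               * (lam * \<bar>f' a\<bar> + (b - a) * \<bar>f' (a+lam)\<bar> + (b - a - lam) * \<bar>f' b\<bar>)
       \<and> 1 / (s + 1) * integral {a+lam..b} g
               * (lam * \<bar>f' a\<bar> + (b - a) * \<bar>f' (a+lam)\<bar> + (b - a - lam) * \<bar>f' b\<bar>)
           \<le> (b - a - lam) / (s + 1)
               * (lam * \<bar>f' a\<bar> + (b - a) * \<bar>f' (a+lam)\<bar> + (b - a - lam) * \<bar>f' b\<bar>)
       \<and> \<bar>integral {a..b} (\<lambda>t. f t * g t) - integral {b-lam..b} f\<bar>
           \<le> 1 / (s + 1) * integral {a..b-lam} g
               * ((b - a - lam) * \<bar>f' a\<bar> + (b - a) * \<bar>f' (b-lam)\<bar> + lam * \<bar>f' b\<bar>)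
       \<and> 1 / (s + 1) * integral {a..b-lam} g
               * ((b - a - lam) * \<bar>f' a\<bar> + (b - a) * \<bar>f' (b-lam)\<bar> + lam * \<bar>f' b\<bar>)
           \<le> lam / (s + 1)
               * ((b - a - lam) * \<bar>f' a\<bar> + (b - a) * \<bar>f' (b-lam)\<bar> + lam * \<bar>f' b\<bar>)"
proof -
  have "a \<le> b" using ab by simp
  have lam: "0 \<le> lam" "lam \<le> b - a"
    using integral_unit_bounded_le[OF g_int \<open>a \<le> b\<close> g_bounds] by (simp_all add: lam_def)
  have g_sub: "g integrable_on {u..v}" if "a \<le> u" "v \<le> b" for u v
    using integrable_on_subinterval[OF g_int] that by auto
  have "integral {a+lam..b} g \<le> b - (a + lam)"
    using lam g_bounds by (intro integral_unit_bounded_le(2) g_sub) auto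
  moreover have "integral {a..b-lam} g \<le> lam"
  proof -
    have "0 \<le> integral {b-lam..b} g"
      using lam g_bounds by (intro integral_unit_bounded_le(1) g_sub) auto
    moreover have "integral {a..b-lam} g + integral {b-lam..b} g = lam"
      using Henstock_Kurzweil_Integration.integral_combine[OF _ _ g_int, of "b - lam"] lam
      by (simp add: lam_def)
    ultimately show ?thesis by linarith
  qed
  ultimately show ?thesis
    using steffensen_left_deviation_le[OF f_ac f'_deriv f'_sconv s(1) \<open>a \<le> b\<close> g_int g_bounds]
      steffensen_right_deviation_le[OF f_ac f'_deriv f'_sconv s(1) \<open>a \<le> b\<close> g_int g_bounds]
      lam s(1)
    unfolding lam_def[symmetric]
    by (auto intro!: mult_right_mono divide_right_mono simp: diff_diff_eq)
qed

end
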